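(* Let $\mathcal F=(A,X,f)$ be a fuzzy automaton. A word $w\in X^*$ D3-merges two states $a,b\in A$ in $\mathcal F$ if and only if it D3-merges them in the associated NFA $\hat{\mathcal F}$. Consequently, a complete fuzzy automaton is D3-directable if and only if every pair of its states is D3-merged by some word.
   Context: A fuzzy automaton is a triple $\mathcal F=(A,X,f)$ with $A$ a finite nonempty set of states, $X$ a finite nonempty alphabet, and $f:A\times X\times A\to[0,1]$, extended to words by $f^*(a,\varepsilon,a)=1$, $f^*(a,\varepsilon,b)=0$ ($b\neq a$), $f^*(a,vx,b)=\max_{c\in A}\min\{f^*(a,v,c),f(c,x,b)\}$. Let $\mathcal F(a,w)=\{b\in A\mid f^*(a,w,b)>0\}$. $\mathcal F$ is complete if $\mathcal F(a,x)\neq\emptyset$ for all $a\in A$, $x\in X$. A word $w$ D3-merges $a,b$ in $\mathcal F$ if $\mathcal F(a,w)\cap\mathcal F(b,w)\ne\emptyset$. $\mathcal F$ is D3-directable if some $w\in X^*$ and $c\in A$ satisfy $c\in\mathcal F(a,w)$ for all $a\in A$. An NFA $\mathcal N=(A,X)$ assigns to each $x\in X$ a relation $x^{\mathcal N}\subseteq A\times A$, extended to words by $H\varepsilon^{\mathcal N}=H$, $Hx^{\mathcal N}=\bigcup_{a\in H}\{b\mid(a,b)\in x^{\mathcal N}\}$, $H(vx)^{\mathcal N}=(Hv^{\mathcal N})x^{\mathcal N}$, $aw^{\mathcal N}=\{a\}w^{\mathcal N}$; $w$ D3-merges $a,b$ in $\mathcal N$ if $aw^{\mathcal N}\cap bw^{\mathcal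 N}\neq\emptyset$. The associated NFA of $\mathcal F$ is $\hat{\mathcal F}=(A,X)$ with $ax^{\hat{\mathcal F}}=\{b\in A\mid f(a,x,b)>0\}$. *)

theory Defs
  imports Complex_Main
begin

definition fuzzy_aut :: "('a::finite \<Rightarrow> 'x::finite \<Rightarrow> 'a \<Rightarrow> real) \<Rightarrow> bool" where
  "fuzzy_aut f \<longleftrightarrow> (\<forall>a x b. 0 \<le> f a x b \<and> f a x b \<le> 1)"

(* f* on reversed words: fstar_rev f a (x # v) b = f*(a, (rev v) x, b) *)
fun fstar_rev :: "('a::finite \<Rightarrow> 'x \<Rightarrow> 'a \<Rightarrow> real) \<Rightarrow> 'a \<Rightarrow> 'x list \<Rightarrow> 'a \<Rightarrow> real" where
  "fstar_rev f a [] b = (if b = a then 1 else 0)"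
| "fstar_rev f a (x # v) b = Max ((\<lambda>c. min (fstar_rev f a v c) (f c x b)) ` UNIV)"

definition fstar :: "('a::finite \<Rightarrow> 'x \<Rightarrow> 'a \<Rightarrow> real) \<Rightarrow> 'a \<Rightarrow> 'x list \<Rightarrow> 'a \<Rightarrow> real" where
  "fstar f a w b = fstar_rev f a (rev w) b"

definition freach :: "('a::finite \<Rightarrow> 'x \<Rightarrow> 'a \<Rightarrow> real) \<Rightarrow> 'a \<Rightarrow> 'x list \<Rightarrow> 'a set" where
  "freach f a w = {b. fstar f a w b > 0}"

definition fcomplete :: "('a::finite \<Rightarrow> 'x \<Rightarrow> 'a \<Rightarrow> real) \<Rightarrow> bool" where
  "fcomplete f \<longleftrightarrow> (\<forall>a x. freach f a [x] \<noteq> {})"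

definition f_D3_merges :: "('a::finite \<Rightarrow> 'x \<Rightarrow> 'a \<Rightarrow> real) \<Rightarrow> 'x list \<Rightarrow> 'a \<Rightarrow> 'a \<Rightarrow> bool" where
  "f_D3_merges f w a b \<longleftrightarrow> freach f a w \<inter> freach f b w \<noteq> {}"

definition f_D3_directable :: "('a::finite \<Rightarrow> 'x \<Rightarrow> 'a \<Rightarrow> real) \<Rightarrow> bool" where
  "f_D3_directable f \<longleftrightarrow> (\<exists>w c. \<forall>a. c \<in> freach f a w)"

definition nfa_img :: "('x \<Rightarrow> ('a \<times> 'a) set) \<Rightarrow> 'a set \<Rightarrow> 'x list \<Rightarrow> 'a set" where
  "nfa_img N H w = foldl (\<lambda>S x. N x `` S) H w"

definition nfa_D3_merges :: "('x \<Rightarrow> ('a \<times> 'a) set) \<Rightarrow> 'x list \<Rightarrow> 'a \<Rightarrow> 'a \<Rightarrow> bool" where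
  "nfa_D3_merges N w a b \<longleftrightarrow> nfa_img N {a} w \<inter> nfa_img N {b} w \<noteq> {}"

definition assoc_nfa :: "('a::finite \<Rightarrow> 'x \<Rightarrow> 'a \<Rightarrow> real) \<Rightarrow> 'x \<Rightarrow> ('a \<times> 'a) set" where
  "assoc_nfa f x = {(a, b). f a x b > 0}"

end

theory Submission
  imports Defs
begin

(* Since min is positive iff both arguments are and a finite max is positive iff
   some entry is, the support of f*(a, vx, -) is the image of the support of f*(a, v, -) under
   the relation {(c, b). f(c, x, b) > 0}. Hence F(a, w) is exactly a w^N in the associated NFA,
   and merging coincides. For directability, completeness makes every F(a, w) nonempty, so
   pairwise merging words can be concatenated to collapse any finite set of states, one state
   at a time, onto a common reachable state. *)

lemma fstar_rev_Cons_pos_iff: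
  "fstar_rev f a (x # v) b > 0 \<longleftrightarrow> (\<exists>c. fstar_rev f a v c > 0 \<and> f c x b > 0)"
  by (simp add: Max_gr_iff)

lemma freach_Nil [simp]: "freach f a [] = {a}"
  by (auto simp: freach_def fstar_def)

lemma freach_snoc: "freach f a (w @ [x]) = {b. \<exists>c\<in>freach f a w. f c x b > 0}"
  using fstar_rev_Cons_pos_iff [of f a x "rev w"] by (auto simp: freach_def fstar_def)

lemma freach_eq_nfa_img: "freach f a w = nfa_img (assoc_nfa f) {a} w"
proof (induction w rule: rev_induct)
  case Nil
  then show ?case by (simp add: nfa_img_def)
next
  case (snoc x w)
  have "nfa_img (assoc_nfa f) {a} (w @ [x]) = assoc_nfa f x `` freach f a w"
    by (simp add: nfa_img_def snoc.IH)
  also have "\<dots> = {b. \<exists>c\<in>freach f a w. f c x b > 0}"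
    by (auto simp: assoc_nfa_def)
  finally show ?case by (simp add: freach_snoc)
qed

lemma f_D3_merges_iff_nfa_D3_merges:
  "f_D3_merges f w a b \<longleftrightarrow> nfa_D3_merges (assoc_nfa f) w a b"
  by (simp add: f_D3_merges_def nfa_D3_merges_def freach_eq_nfa_img)

lemma freach_append: "freach f a (w @ u) = (\<Union>c\<in>freach f a w. freach f c u)"
proof (induction u rule: rev_induct)
  case Nil
  then show ?case by simp
next
  case (snoc x u)
  then show ?case
    unfolding append_assoc [symmetric] freach_snoc by auto
qed

lemma freach_nonempty:
  assumes "fcomplete f"
  shows "freach f a w \<noteq> {}"
proof (induction w rule: rev_induct)
  case Nil
  then show ?case by simp
next
  case (snoc x w)
  then obtain c where "c \<in> freach f a w" by blast
  moreover obtain d where "d \<in> freach f c [x]"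
    using assms by (auto simp: fcomplete_def)
  ultimately show ?case
    by (auto simp: freach_append)
qed

lemma common_successor_of_finite_set:
  assumes "fcomplete f" and merge: "\<forall>a b. \<exists>w. f_D3_merges f w a b" and "finite S"
  shows "\<exists>w c. \<forall>a\<in>S. c \<in> freach f a w"
  using \<open>finite S\<close>
proof (induction S rule: finite_induct)
  case empty
  then show ?case by simp
next
  case (insert d S)
  then obtain w c where c: "\<forall>a\<in>S. c \<in> freach f a w" by blast
  obtain e where e: "e \<in> freach f d w"
    using freach_nonempty [OF \<open>fcomplete f\<close>] by blast
  obtain u c' where "c' \<in> freach f c u" "c' \<in> freach f e u"
    using merge by (metis disjoint_iff f_D3_merges_def)
  with c e have "\<forall>a\<in>insert d S. c' \<in> freach f a (w @ u)"
    by (auto simp: freach_append)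
  then show ?case by blast
qed

lemma f_D3_directable_iff_pairwise_merges:
  fixes f :: "'a::finite \<Rightarrow> 'x::finite \<Rightarrow> 'a \<Rightarrow> real"
  assumes "fcomplete f"
  shows "f_D3_directable f \<longleftrightarrow> (\<forall>a b. \<exists>w. f_D3_merges f w a b)"
proof
  assume "f_D3_directable f"
  then show "\<forall>a b. \<exists>w. f_D3_merges f w a b"
    by (auto simp: f_D3_directable_def f_D3_merges_def)
next
  assume "\<forall>a b. \<exists>w. f_D3_merges f w a b"
  from common_successor_of_finite_set [OF assms this finite_UNIV]
  show "f_D3_directable f"
    by (simp add: f_D3_directable_def)
qed

theorem lemma5p2:
  fixes f :: "'a::finite \<Rightarrow> 'x::finite \<Rightarrow> 'a \<Rightarrow> real"
  assumes "fuzzy_aut f"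
  shows "(\<forall>w a b. f_D3_merges f w a b \<longleftrightarrow> nfa_D3_merges (assoc_nfa f) w a b)
       \<and> (fcomplete f \<longrightarrow> (f_D3_directable f \<longleftrightarrow> (\<forall>a b. \<exists>w. f_D3_merges f w a b)))"
  using f_D3_merges_iff_nfa_D3_merges f_D3_directable_iff_pairwise_merges by blast

end
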